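(* Let $\widehat p\in(0,\infty)^C$ be a probability vector ($\sum_c\widehat p_c=1$), $\varepsilon\ge0$ and $\rho\in\mathbb R_+^C$ with $\sum_{c=1}^C\widehat p_c\rho_c\le\varepsilon$. The set \[\mathcal Q=\Big\{q\in\mathbb R_+^C:\sum_{c=1}^Cq_c=1,\ \sum_{c=1}^Cq_c(\log q_c-\log\widehat p_c+\rho_c)\le\varepsilon\Big\}\] is compact and convex, and its support function satisfies, for every $t\in\mathbb R^C$, \[h_{\mathcal Q}(t):=\sup_{q\in\mathcal Q}q^\top t=\inf_{\alpha\in\mathbb R,\ \beta>0}\Big\{\alpha+\beta\varepsilon+\beta\sum_{c=1}^C\widehat p_c\exp\Big(\frac{t_c-\alpha}{\beta}-\rho_c-1\Big)\Big\}.\]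
   Context: The convention $0\log0=0$ is used. *)

theory Defs
  imports "HOL-Analysis.Analysis"
begin

definition kl_term :: "real \<Rightarrow> real \<Rightarrow> real \<Rightarrow> real" where
  "kl_term q p r = (if q = 0 then 0 else q * (ln q - ln p + r))"

definition Qset :: "real^'c \<Rightarrow> real^'c \<Rightarrow> real \<Rightarrow> (real^'c) set" where
  "Qset p rho eps = {q. (\<forall>c. q$c \<ge> 0) \<and> (\<Sum>c\<in>UNIV. q$c) = 1 \<and>
      (\<Sum>c\<in>UNIV. kl_term (q$c) (p$c) (rho$c)) \<le> eps}"

end

theory Submission
  imports Defs "HOL-Real_Asymp.Real_Asymp"
begin

(* Weak duality is the Fenchel-Young inequality q s <= q (ln q - ln p + r) + p exp (s - r - 1),
   summed over c with s = (t_c - alpha) / beta.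
   For the converse, tilt p exponentially: q_l is proportional to p exp (l t - rho), with
   normaliser Z l. At beta = 1/l and the optimal alpha the dual objective equals
   (eps + ln Z l) / l, while KL(q_l) = l <q_l, t> - ln Z l. Let V be the supremum over Q and
   delta > 0. If t < V + delta everywhere, a large l brings the dual value below V + delta.
   Otherwise the tilted mean <q_l, t>, continuous in l, starts at <q_0, t> <= V (q_0 lies in Q
   by Gibbs' inequality) and eventually exceeds V + delta/2; where it equals V + delta/2, q_l is
   outside Q, and this says exactly that the dual value at l is below V + delta/2. *)

lemma kl_term_fenchel_young:
  fixes q p r s :: real
  assumes "0 \<le> q" "0 < p"
  shows "q * s \<le> kl_term q p r + p * exp (s - r - 1)"
proof (cases "q = 0")
  case True
  then show ?thesis using assms by (simp add: kl_term_def)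
next
  case False
  then have q: "0 < q" using assms by simp
  define u where "u = s - r - 1 + ln p - ln q"
  have "p * exp (s - r - 1) = q * exp u"
    using q assms by (simp add: u_def exp_add exp_diff)
  moreover have "q * (u + 1) \<le> q * exp u"
    using q by (intro mult_left_mono) (auto simp: exp_ge_add_one_self add.commute)
  moreover have "kl_term q p r = q * s - q * (u + 1)"
    using q by (simp add: kl_term_def u_def algebra_simps)
  ultimately show ?thesis by linarith
qed

lemma kl_term_fenchel_young_eq:
  fixes q p r s :: real
  assumes "0 < p" "q = p * exp (s - r - 1)"
  shows "kl_term q p r = q * s - p * exp (s - r - 1)"
proof -
  have "0 < q" and ln_q: "ln q - ln p + r = s - 1"
    using assms by (simp_all add: ln_mult)
  then have "kl_term q p r = q * s - q"
    unfolding kl_term_def ln_q by (simp add: right_diff_distrib)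
  then show ?thesis using assms(2) by simp
qed

lemma convex_on_kl_term:
  fixes p r :: real
  assumes "0 < p"
  shows "convex_on {0..} (\<lambda>x. kl_term x p r)"
proof (rule convex_onI)
  fix u x y :: real
  assume u: "0 < u" "u < 1" and xy: "x \<in> {0..}" "y \<in> {0..}"
  define w where "w = (1 - u) *\<^sub>R x + u *\<^sub>R y"
  show "kl_term w p r \<le> (1 - u) * kl_term x p r + u * kl_term y p r"
  proof (cases "w = 0")
    case True
    moreover have "0 \<le> (1 - u) * x" "0 \<le> u * y" using u xy by simp_all
    ultimately have "(1 - u) * x = 0 \<and> u * y = 0" by (simp add: w_def add_nonneg_eq_0_iff)
    then have "x = 0 \<and> y = 0" using u by simp
    then show ?thesis using True by (simp add: kl_term_def)
  next
    case False
    moreover have "0 \<le> w" using u xy by (simp add: w_def)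
    ultimately have "0 < w" by simp
    \<comment> \<open>the Fenchel-Young bound is attained at this s, so kl_term is a supremum of affine functions\<close>
    define s where "s = ln w - ln p + r + 1"
    have "w = p * exp (s - r - 1)"
      using \<open>0 < w\<close> assms by (simp add: s_def exp_diff)
    then have "kl_term w p r = w * s - p * exp (s - r - 1)"
      by (rule kl_term_fenchel_young_eq[OF assms])
    also have "\<dots> = (1 - u) * (x * s) + u * (y * s) - p * exp (s - r - 1)"
      by (simp add: w_def algebra_simps)
    also have "\<dots> \<le> (1 - u) * (kl_term x p r + p * exp (s - r - 1))
        + u * (kl_term y p r + p * exp (s - r - 1)) - p * exp (s - r - 1)"
      using u xy assms by (intro diff_right_mono add_mono mult_left_mono kl_term_fenchel_young) auto
    also have "\<dots> = (1 - u) * kl_term x p r + u * kl_term y p r"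
      by (simp add: algebra_simps)
    finally show ?thesis .
  qed
qed simp

lemma continuous_on_kl_term:
  fixes p r :: real
  assumes "0 < p"
  shows "continuous_on {0..} (\<lambda>x. kl_term x p r)"
proof -
  have "continuous (at x within {0..}) (\<lambda>x. kl_term x p r)" if "0 \<le> x" for x
  proof (cases "x = 0")
    case True
    have "((\<lambda>y::real. y * ln y - y * (ln p - r)) \<longlongrightarrow> 0) (at_right 0)"
      by real_asymp
    moreover have "\<forall>\<^sub>F y in at_right 0. y * ln y - y * (ln p - r) = kl_term y p r"
      using eventually_at_right_less[of 0] by eventually_elim (auto simp: kl_term_def algebra_simps)
    ultimately have "((\<lambda>y. kl_term y p r) \<longlongrightarrow> 0) (at_right 0)"
      by (rule Lim_transform_eventually)
    then show ?thesis using True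
      by (simp add: continuous_within at_within_Ici_at_right kl_term_def)
  next
    case False
    with that have "0 < x" by simp
    have "\<forall>\<^sub>F y in nhds x. y * (ln y - ln p + r) = kl_term y p r"
      using eventually_nhds_in_open[of "{0<..}" x] \<open>0 < x\<close>
      by (auto elim!: eventually_mono simp: kl_term_def)
    moreover have "isCont (\<lambda>y. y * (ln y - ln p + r)) x"
      using \<open>0 < x\<close> by (intro continuous_intros) auto
    ultimately show ?thesis
      by (simp add: isCont_cong continuous_at_imp_continuous_at_within)
  qed
  then show ?thesis by (simp add: continuous_on_eq_continuous_within)
qed

definition kl_div :: "real^'c \<Rightarrow> real^'c \<Rightarrow> real^'c \<Rightarrow> real" where
  "kl_div q p rho = (\<Sum>c\<in>UNIV. kl_term (q$c) (p$c) (rho$c))"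

definition dual_objective ::
    "real^'c \<Rightarrow> real^'c \<Rightarrow> real \<Rightarrow> real^'c \<Rightarrow> real \<Rightarrow> real \<Rightarrow> real" where
  "dual_objective p rho eps t \<alpha> \<beta> =
     \<alpha> + \<beta> * eps + \<beta> * (\<Sum>c\<in>UNIV. p$c * exp ((t$c - \<alpha>) / \<beta> - rho$c - 1))"

lemma mem_Qset:
  "q \<in> Qset p rho eps \<longleftrightarrow> (\<forall>c. 0 \<le> q$c) \<and> (\<Sum>c\<in>UNIV. q$c) = 1 \<and> kl_div q p rho \<le> eps"
  by (simp add: Qset_def kl_div_def)

lemma kl_div_fenchel_young:
  fixes q p rho :: "real^'c" and s :: "'c \<Rightarrow> real"
  assumes "\<And>c. 0 \<le> q$c" "\<And>c. 0 < p$c"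
  shows "(\<Sum>c\<in>UNIV. q$c * s c) \<le> kl_div q p rho + (\<Sum>c\<in>UNIV. p$c * exp (s c - rho$c - 1))"
proof -
  have "(\<Sum>c\<in>UNIV. q$c * s c)
      \<le> (\<Sum>c\<in>UNIV. kl_term (q$c) (p$c) (rho$c) + p$c * exp (s c - rho$c - 1))"
    by (intro sum_mono kl_term_fenchel_young assms)
  then show ?thesis by (simp add: kl_div_def sum.distrib)
qed

lemma kl_div_ge_neg_ln:
  fixes q p rho :: "real^'c"
  assumes "\<And>c. 0 \<le> q$c" "(\<Sum>c\<in>UNIV. q$c) = 1" "\<And>c. 0 < p$c"
  shows "- ln (\<Sum>c\<in>UNIV. p$c * exp (- rho$c)) \<le> kl_div q p rho"
proof -
  define Z where "Z = (\<Sum>c\<in>UNIV. p$c * exp (- rho$c))"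
  have "0 < Z" unfolding Z_def using assms(3) by (intro sum_pos) auto
  have "(\<Sum>c\<in>UNIV. q$c * (1 - ln Z)) = 1 - ln Z"
    using assms(2) by (simp flip: sum_distrib_right)
  moreover have "(\<Sum>c\<in>UNIV. p$c * exp ((1 - ln Z) - rho$c - 1))
      = (\<Sum>c\<in>UNIV. p$c * exp (- rho$c)) / Z"
    using \<open>0 < Z\<close> by (simp add: sum_divide_distrib exp_diff exp_minus field_simps)
  moreover have "\<dots> = 1" using \<open>0 < Z\<close> by (simp add: Z_def)
  ultimately show ?thesis
    using kl_div_fenchel_young[OF assms(1,3), of "\<lambda>c. 1 - ln Z" rho] by (simp add: Z_def)
qed

lemma compact_Qset:
  fixes p rho :: "real^'c"
  assumes "\<And>c. 0 < p$c"
  shows "compact (Qset p rho eps)"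
proof -
  define S where "S = {q::real^'c. (\<forall>c. 0 \<le> q$c) \<and> (\<Sum>c\<in>UNIV. q$c) = 1}"
  have "closed S" unfolding S_def
    by (intro closed_Collect_conj closed_Collect_all closed_Collect_le closed_Collect_eq
        continuous_intros)
  moreover have "continuous_on S (\<lambda>q. kl_div q p rho)"
    unfolding kl_div_def
  proof (intro continuous_on_sum)
    fix c :: 'c
    show "continuous_on S (\<lambda>q. kl_term (q$c) (p$c) (rho$c))"
      by (rule continuous_on_compose2[OF continuous_on_kl_term[of "p$c" "rho$c"]])
         (use assms in \<open>auto simp: S_def intro: continuous_intros\<close>)
  qed
  moreover have "Qset p rho eps = S \<inter> (\<lambda>q. kl_div q p rho) -` {..eps}"
    by (auto simp: mem_Qset S_def)
  ultimately have "closed (Qset p rho eps)"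
    by (simp add: continuous_closed_preimage)
  moreover have "norm q \<le> 1" if "q \<in> Qset p rho eps" for q
  proof -
    have "norm q \<le> (\<Sum>c\<in>UNIV. \<bar>q$c\<bar>)" by (rule norm_le_l1_cart)
    also have "\<dots> = 1" using that by (simp add: mem_Qset)
    finally show ?thesis .
  qed
  then have "bounded (Qset p rho eps)" unfolding bounded_iff by blast
  ultimately show ?thesis by (simp add: compact_eq_bounded_closed)
qed

lemma convex_Qset:
  fixes p rho :: "real^'c"
  assumes "\<And>c. 0 < p$c"
  shows "convex (Qset p rho eps)"
proof (rule convexI)
  fix x y :: "real^'c" and u v :: real
  assume x: "x \<in> Qset p rho eps" and y: "y \<in> Qset p rho eps"
    and uv: "0 \<le> u" "0 \<le> v" "u + v = 1"
  have "kl_div (u *\<^sub>R x + v *\<^sub>R y) p rho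
      \<le> (\<Sum>c\<in>UNIV. u * kl_term (x$c) (p$c) (rho$c) + v * kl_term (y$c) (p$c) (rho$c))"
    unfolding kl_div_def
  proof (intro sum_mono)
    fix c
    show "kl_term ((u *\<^sub>R x + v *\<^sub>R y) $ c) (p$c) (rho$c)
        \<le> u * kl_term (x$c) (p$c) (rho$c) + v * kl_term (y$c) (p$c) (rho$c)"
      using convex_onD[OF convex_on_kl_term[OF assms], of v "x$c" "y$c"] x y uv
      by (simp add: mem_Qset add.commute[of "u * _"] add.commute[of "u *\<^sub>R _"]
          flip: eq_diff_eq)
  qed
  also have "\<dots> = u * kl_div x p rho + v * kl_div y p rho"
    by (simp add: kl_div_def sum.distrib sum_distrib_left)
  also have "\<dots> \<le> u * eps + v * eps"
    using x y uv by (intro add_mono mult_left_mono) (auto simp: mem_Qset)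
  finally have "kl_div (u *\<^sub>R x + v *\<^sub>R y) p rho \<le> eps"
    using uv by (simp flip: distrib_right)
  moreover have "(\<Sum>c\<in>UNIV. (u *\<^sub>R x + v *\<^sub>R y) $ c) = 1"
    using x y uv by (simp add: mem_Qset sum.distrib flip: sum_distrib_left)
  ultimately show "u *\<^sub>R x + v *\<^sub>R y \<in> Qset p rho eps"
    using x y uv by (simp add: mem_Qset)
qed

lemma inner_le_dual_objective:
  fixes q p rho t :: "real^'c"
  assumes "q \<in> Qset p rho eps" "\<And>c. 0 < p$c" "0 < \<beta>"
  shows "q \<bullet> t \<le> dual_objective p rho eps t \<alpha> \<beta>"
proof -
  have q: "\<And>c. 0 \<le> q$c" "(\<Sum>c\<in>UNIV. q$c) = 1" "kl_div q p rho \<le> eps"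
    using assms(1) by (auto simp: mem_Qset)
  have "(q \<bullet> t - \<alpha>) / \<beta> = (q \<bullet> t - \<alpha> * (\<Sum>c\<in>UNIV. q$c)) / \<beta>"
    using q(2) by simp
  also have "\<dots> = (\<Sum>c\<in>UNIV. q$c * ((t$c - \<alpha>) / \<beta>))"
    by (simp add: inner_vec_def sum_divide_distrib sum_subtractf sum_distrib_left
        sum_distrib_right algebra_simps diff_divide_distrib)
  also have "\<dots> \<le> eps + (\<Sum>c\<in>UNIV. p$c * exp ((t$c - \<alpha>) / \<beta> - rho$c - 1))"
    using kl_div_fenchel_young[OF q(1) assms(2), of "\<lambda>c. (t$c - \<alpha>) / \<beta>" rho] q(3)
    by linarith
  finally show ?thesis
    using assms(3) by (simp add: dual_objective_def divide_le_eq algebra_simps)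
qed

lemma exists_exp_weighted_sum_nonneg:
  fixes u s :: "'c::finite \<Rightarrow> real"
  assumes "\<And>c. 0 < u c" "0 < s c0"
  shows "\<exists>L\<ge>0. 0 \<le> (\<Sum>c\<in>UNIV. u c * exp (L * s c) * s c)"
proof -
  define B where "B = (\<Sum>c\<in>UNIV. u c * \<bar>s c\<bar>)"
  \<comment> \<open>makes the c0 term at least u c0 L (s c0)^2 = B, which bounds the negative terms\<close>
  define L where "L = B / (u c0 * (s c0)\<^sup>2)"
  have "0 \<le> B" unfolding B_def using assms(1) by (intro sum_nonneg) (simp add: less_imp_le)
  then have "0 \<le> L" unfolding L_def using assms(1)[of c0] assms(2) by simp
  have lower: "- (u c * \<bar>s c\<bar>) \<le> u c * exp (L * s c) * s c" for c
  proof (cases "0 \<le> s c")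
    case True
    then have "0 \<le> u c * exp (L * s c) * s c" using assms(1)[of c] by simp
    moreover have "0 \<le> u c * \<bar>s c\<bar>" using assms(1)[of c] by simp
    ultimately show ?thesis by linarith
  next
    case False
    then have "exp (L * s c) \<le> 1" using \<open>0 \<le> L\<close> by (simp add: mult_nonneg_nonpos)
    then have "s c \<le> exp (L * s c) * s c"
      using mult_right_mono_neg[of "exp (L * s c)" 1 "s c"] False by simp
    then show ?thesis
      using mult_left_mono[of "s c" _ "u c"] assms(1)[of c] False by (simp add: mult.assoc)
  qed
  have "B = u c0 * (L * s c0) * s c0"
    using assms(1)[of c0] assms(2) by (simp add: L_def power2_eq_square)
  also have "\<dots> \<le> u c0 * exp (L * s c0) * s c0"
  proof (intro mult_right_mono mult_left_mono)
    show "L * s c0 \<le> exp (L * s c0)" using exp_ge_add_one_self[of "L * s c0"] by linarith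
  qed (use assms(1)[of c0] assms(2) in simp_all)
  finally have top: "B \<le> u c0 * exp (L * s c0) * s c0" .
  have "- B \<le> - (\<Sum>c\<in>UNIV - {c0}. u c * \<bar>s c\<bar>)"
    unfolding B_def using assms(1) by (intro le_imp_neg_le sum_mono2) (auto simp: less_imp_le)
  also have "\<dots> \<le> (\<Sum>c\<in>UNIV - {c0}. u c * exp (L * s c) * s c)"
    unfolding sum_negf[symmetric] by (intro sum_mono lower)
  finally have rest: "- B \<le> (\<Sum>c\<in>UNIV - {c0}. u c * exp (L * s c) * s c)" .
  have "(\<Sum>c\<in>UNIV. u c * exp (L * s c) * s c)
      = u c0 * exp (L * s c0) * s c0 + (\<Sum>c\<in>UNIV - {c0}. u c * exp (L * s c) * s c)"
    by (rule sum.remove) auto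
  then show ?thesis using top rest \<open>0 \<le> L\<close> by (intro exI[of _ L]) auto
qed

locale exp_tilting =
  fixes p rho t :: "real^'c"
  assumes p_pos: "\<And>c. 0 < p$c"
begin

definition tilt_weight :: "real \<Rightarrow> 'c \<Rightarrow> real" where
  "tilt_weight l c = p$c * exp (l * t$c - rho$c)"

definition partition_function :: "real \<Rightarrow> real" where
  "partition_function l = (\<Sum>c\<in>UNIV. tilt_weight l c)"

definition tilt :: "real \<Rightarrow> real^'c" where
  "tilt l = (\<chi> c. tilt_weight l c / partition_function l)"

lemma tilt_weight_pos: "0 < tilt_weight l c"
  using p_pos by (simp add: tilt_weight_def)

lemma partition_function_pos: "0 < partition_function l"
  unfolding partition_function_def using tilt_weight_pos by (intro sum_pos) auto

lemma tilt_nonneg: "0 \<le> tilt l $ c"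
  using tilt_weight_pos partition_function_pos by (simp add: tilt_def less_imp_le)

lemma sum_tilt: "(\<Sum>c\<in>UNIV. tilt l $ c) = 1"
  using partition_function_pos[of l]
  by (simp add: tilt_def partition_function_def flip: sum_divide_distrib)

lemma inner_tilt: "tilt l \<bullet> t = (\<Sum>c\<in>UNIV. tilt_weight l c * t$c) / partition_function l"
  by (simp add: tilt_def inner_vec_def sum_divide_distrib)

lemma kl_div_tilt: "kl_div (tilt l) p rho = l * (tilt l \<bullet> t) - ln (partition_function l)"
proof -
  have "kl_term (tilt l $ c) (p$c) (rho$c)
      = l * (tilt l $ c * t$c) - ln (partition_function l) * tilt l $ c" for c
  proof -
    have "0 < tilt l $ c"
      using tilt_weight_pos partition_function_pos by (simp add: tilt_def)
    moreover have ln_tilt: "ln (tilt l $ c) - ln (p$c) + rho$c = l * t$c - ln (partition_function l)"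
      using partition_function_pos[of l] p_pos[of c]
      by (simp add: tilt_def tilt_weight_def ln_div ln_mult)
    ultimately show ?thesis unfolding kl_term_def ln_tilt by (simp add: algebra_simps)
  qed
  then have "kl_div (tilt l) p rho
      = l * (\<Sum>c\<in>UNIV. tilt l $ c * t$c) - ln (partition_function l) * (\<Sum>c\<in>UNIV. tilt l $ c)"
    by (simp add: kl_div_def sum_subtractf sum_distrib_left)
  then show ?thesis by (simp add: sum_tilt inner_vec_def)
qed

lemma dual_objective_tilt:
  assumes "0 < l"
  shows "dual_objective p rho eps t ((ln (partition_function l) - 1) / l) (1 / l)
    = (eps + ln (partition_function l)) / l"
proof -
  define \<alpha> where "\<alpha> = (ln (partition_function l) - 1) / l"
  have "p$c * exp ((t$c - \<alpha>) / (1 / l) - rho$c - 1) = tilt l $ c" for c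
  proof -
    have arg: "(t$c - \<alpha>) / (1 / l) - rho$c - 1 = (l * t$c - rho$c) - ln (partition_function l)"
      using assms by (simp add: \<alpha>_def field_simps)
    show ?thesis
      unfolding arg using partition_function_pos[of l] by (simp add: tilt_def tilt_weight_def exp_diff)
  qed
  then have "(\<Sum>c\<in>UNIV. p$c * exp ((t$c - \<alpha>) / (1 / l) - rho$c - 1)) = 1"
    by (simp add: sum_tilt)
  then show ?thesis
    using assms by (simp add: dual_objective_def \<alpha>_def field_simps)
qed

lemma continuous_on_inner_tilt: "continuous_on S (\<lambda>l. tilt l \<bullet> t)"
  unfolding inner_tilt partition_function_def tilt_weight_def
  using partition_function_pos[unfolded partition_function_def tilt_weight_def]
  by (intro continuous_intros) (auto simp: dual_order.strict_implies_not_eq)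

lemma partition_function_le:
  assumes "\<And>c. t$c \<le> m" "0 \<le> l"
  shows "partition_function l \<le> exp (l * m) * partition_function 0"
  unfolding partition_function_def sum_distrib_left
proof (intro sum_mono)
  fix c
  have "l * t$c \<le> l * m" using assms by (intro mult_left_mono) auto
  then have "exp (l * t$c - rho$c) \<le> exp (l * m) * exp (0 * t$c - rho$c)"
    by (simp flip: exp_add)
  then have "tilt_weight l c \<le> p$c * (exp (l * m) * exp (0 * t$c - rho$c))"
    unfolding tilt_weight_def using p_pos[of c] by (intro mult_left_mono) auto
  then show "tilt_weight l c \<le> exp (l * m) * tilt_weight 0 c"
    by (simp add: tilt_weight_def ac_simps)
qed

lemma exists_inner_tilt_ge:
  assumes "a < t$c0"
  shows "\<exists>L\<ge>0. a \<le> tilt L \<bullet> t"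
proof -
  obtain L where "0 \<le> L"
    and nonneg: "0 \<le> (\<Sum>c\<in>UNIV. p$c * exp (- rho$c) * exp (L * (t$c - a)) * (t$c - a))"
    using exists_exp_weighted_sum_nonneg[of "\<lambda>c. p$c * exp (- rho$c)" "\<lambda>c. t$c - a" c0]
      p_pos assms by auto
  have shift: "tilt_weight L c * (t$c - a)
      = exp (L * a) * (p$c * exp (- rho$c) * exp (L * (t$c - a)) * (t$c - a))" for c
  proof -
    have "L * t$c - rho$c = L * a + - rho$c + L * (t$c - a)" by (simp add: algebra_simps)
    then show ?thesis unfolding tilt_weight_def by (simp only: exp_add ac_simps)
  qed
  have "(\<Sum>c\<in>UNIV. tilt_weight L c * (t$c - a))
      = exp (L * a) * (\<Sum>c\<in>UNIV. p$c * exp (- rho$c) * exp (L * (t$c - a)) * (t$c - a))"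
    by (simp only: shift sum_distrib_left)
  then have "0 \<le> (\<Sum>c\<in>UNIV. tilt_weight L c * (t$c - a))"
    using nonneg by simp
  then have "a * partition_function L \<le> (\<Sum>c\<in>UNIV. tilt_weight L c * t$c)"
    by (simp add: partition_function_def sum_subtractf sum_distrib_left algebra_simps)
  then show ?thesis
    using \<open>0 \<le> L\<close> partition_function_pos[of L] by (auto simp: inner_tilt le_divide_eq)
qed

lemma exists_dual_value_le_of_bounded:
  assumes "\<And>c. t$c \<le> m" "m < v"
  shows "\<exists>l>0. (eps + ln (partition_function l)) / l \<le> v"
proof -
  define Z0 where "Z0 = partition_function 0"
  define l where "l = (\<bar>eps + ln Z0\<bar> + 1) / (v - m)"
  have "0 < l" using assms(2) by (simp add: l_def add_nonneg_pos)
  have "l * (v - m) = \<bar>eps + ln Z0\<bar> + 1" using assms(2) by (simp add: l_def)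
  then have slack: "eps + ln Z0 \<le> l * v - l * m" by (simp add: right_diff_distrib)
  have "ln (partition_function l) \<le> ln (exp (l * m) * Z0)"
    using partition_function_le[OF assms(1), of l] \<open>0 < l\<close>
      partition_function_pos[of l] partition_function_pos[of 0]
    by (simp add: Z0_def)
  also have "\<dots> = l * m + ln Z0"
    using partition_function_pos[of 0] by (simp add: ln_mult Z0_def)
  finally have "eps + ln (partition_function l) \<le> l * v" using slack by linarith
  then show ?thesis using \<open>0 < l\<close> by (intro exI[of _ l]) (simp add: divide_le_eq mult.commute)
qed

lemma exists_dual_value_lt_of_crossing:
  assumes "tilt 0 \<bullet> t < v" "v < t$c0"
    and "\<And>l. tilt l \<in> Qset p rho eps \<Longrightarrow> tilt l \<bullet> t < v"
  shows "\<exists>l>0. (eps + ln (partition_function l)) / l < v"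
proof -
  obtain L where "0 \<le> L" "v \<le> tilt L \<bullet> t"
    using exists_inner_tilt_ge[OF assms(2)] by blast
  then obtain l where l: "0 \<le> l" "tilt l \<bullet> t = v"
    using IVT'[of "\<lambda>l. tilt l \<bullet> t" 0 v L] assms(1) continuous_on_inner_tilt by force
  then have "tilt l \<notin> Qset p rho eps" using assms(3) by force
  then have "eps < l * v - ln (partition_function l)"
    using kl_div_tilt[of l] l(2) by (auto simp: mem_Qset tilt_nonneg sum_tilt)
  moreover have "l \<noteq> 0" using l(2) assms(1) by auto
  ultimately show ?thesis
    using l(1) by (intro exI[of _ l]) (simp add: divide_less_eq mult.commute)
qed

lemma exists_dual_value_le:
  assumes "tilt 0 \<in> Qset p rho eps" "\<And>q. q \<in> Qset p rho eps \<Longrightarrow> q \<bullet> t \<le> V" "0 < \<delta>"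
  shows "\<exists>l>0. (eps + ln (partition_function l)) / l \<le> V + \<delta>"
proof (cases "\<forall>c. t$c < V + \<delta>")
  case True
  define m where "m = Max (range (\<lambda>c. t$c))"
  have "m \<in> range (\<lambda>c. t$c)" unfolding m_def by (intro Max_in) auto
  then have "m < V + \<delta>" using True by auto
  moreover have "t$c \<le> m" for c unfolding m_def by (intro Max_ge) auto
  ultimately show ?thesis using exists_dual_value_le_of_bounded by blast
next
  case False
  then obtain c0 where "V + \<delta> \<le> t$c0" by (auto simp: not_less)
  then have "V + \<delta> / 2 < t$c0" using assms(3) by linarith
  moreover have "tilt 0 \<bullet> t < V + \<delta> / 2" using assms(2)[OF assms(1)] assms(3) by linarith
  moreover have "tilt l \<bullet> t < V + \<delta> / 2" if "tilt l \<in> Qset p rho eps" for l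
    using assms(2)[OF that] assms(3) by linarith
  ultimately obtain l where "0 < l" "(eps + ln (partition_function l)) / l < V + \<delta> / 2"
    using exists_dual_value_lt_of_crossing by blast
  then show ?thesis using assms(3) by (intro exI[of _ l]) auto
qed

lemma support_function_Qset:
  assumes "tilt 0 \<in> Qset p rho eps"
  shows "Sup ((\<lambda>q. q \<bullet> t) ` Qset p rho eps)
    = Inf {dual_objective p rho eps t \<alpha> \<beta> | \<alpha> \<beta>. 0 < \<beta>}"
proof -
  define D where "D = {dual_objective p rho eps t \<alpha> \<beta> | \<alpha> \<beta>. 0 < \<beta>}"
  define V where "V = Sup ((\<lambda>q. q \<bullet> t) ` Qset p rho eps)"
  have weak: "q \<bullet> t \<le> d" if "q \<in> Qset p rho eps" "d \<in> D" for q d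
    using that p_pos by (auto simp: D_def intro!: inner_le_dual_objective)
  have D_mem: "dual_objective p rho eps t 0 1 \<in> D"
    unfolding D_def by (intro CollectI exI[of _ 0] exI[of _ "1::real"]) simp
  then have "D \<noteq> {}" by auto
  have "bdd_above ((\<lambda>q. q \<bullet> t) ` Qset p rho eps)"
    using weak[OF _ D_mem] by (rule bdd_aboveI2)
  then have upper: "q \<bullet> t \<le> V" if "q \<in> Qset p rho eps" for q
    unfolding V_def using that by (intro cSup_upper) auto
  have lower: "V \<le> d" if "d \<in> D" for d
    unfolding V_def using assms weak that by (intro cSup_least) auto
  then have "bdd_below D" by (rule bdd_belowI)
  have "Inf D \<le> V"
  proof (rule field_le_epsilon)
    fix \<delta> :: real
    assume "0 < \<delta>"
    then obtain l where "0 < l" and le: "(eps + ln (partition_function l)) / l \<le> V + \<delta>"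
      using exists_dual_value_le[OF assms upper] by blast
    moreover have "0 < 1 / l" using \<open>0 < l\<close> by simp
    ultimately have "(eps + ln (partition_function l)) / l \<in> D"
      unfolding D_def dual_objective_tilt[OF \<open>0 < l\<close>, symmetric] by blast
    then have "Inf D \<le> (eps + ln (partition_function l)) / l"
      using \<open>bdd_below D\<close> by (rule cInf_lower)
    then show "Inf D \<le> V + \<delta>" using le by linarith
  qed
  moreover have "V \<le> Inf D" using \<open>D \<noteq> {}\<close> lower by (intro cInf_greatest)
  ultimately show ?thesis by (simp add: V_def D_def)
qed

lemma tilt_zero_mem_Qset:
  assumes "(\<Sum>c\<in>UNIV. p$c) = 1" "(\<Sum>c\<in>UNIV. p$c * rho$c) \<le> eps"
  shows "tilt 0 \<in> Qset p rho eps"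
proof -
  have "kl_div (tilt 0) p rho = - ln (\<Sum>c\<in>UNIV. p$c * exp (- rho$c))"
    by (simp add: kl_div_tilt partition_function_def tilt_weight_def)
  also have "\<dots> \<le> kl_div p p rho"
    using kl_div_ge_neg_ln[of p p rho] p_pos assms(1) by (simp add: less_imp_le)
  also have "\<dots> = (\<Sum>c\<in>UNIV. p$c * rho$c)"
    by (auto simp: kl_div_def kl_term_def intro!: sum.cong)
  finally show ?thesis using assms(2) by (simp add: mem_Qset tilt_nonneg sum_tilt)
qed

end

theorem lemmaB1:
  fixes p rho :: "real^'c" and eps :: real
  assumes "\<forall>c. p$c > 0"
    and "(\<Sum>c\<in>UNIV. p$c) = 1"
    and "eps \<ge> 0"
    and "\<forall>c. rho$c \<ge> 0"
    and "(\<Sum>c\<in>UNIV. p$c * rho$c) \<le> eps"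
  shows "compact (Qset p rho eps) \<and> convex (Qset p rho eps) \<and>
    (\<forall>t::real^'c. Sup ((\<lambda>q. q \<bullet> t) ` Qset p rho eps) =
       Inf {\<alpha> + \<beta> * eps + \<beta> * (\<Sum>c\<in>UNIV. p$c * exp ((t$c - \<alpha>) / \<beta> - rho$c - 1)) | \<alpha> \<beta>. \<beta> > 0})"
proof -
  have p_pos: "\<And>c. 0 < p$c" using assms(1) by blast
  have "Sup ((\<lambda>q. q \<bullet> t) ` Qset p rho eps) =
      Inf {\<alpha> + \<beta> * eps + \<beta> * (\<Sum>c\<in>UNIV. p$c * exp ((t$c - \<alpha>) / \<beta> - rho$c - 1)) | \<alpha> \<beta>. \<beta> > 0}"
    for t :: "real^'c"
  proof -
    interpret exp_tilting p rho t by unfold_locales (fact p_pos)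
    show ?thesis
      using support_function_Qset[OF tilt_zero_mem_Qset[OF assms(2,5)]]
      by (simp add: dual_objective_def)
  qed
  then show ?thesis using compact_Qset[OF p_pos] convex_Qset[OF p_pos] by blast
qed

end
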